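(* Let $T$ be a pruned group tree and $X$ a Polish $G_T$-space. Then there is a Borel injective map $f:X\to\mathbb{R}^T$ that is equivariant: $g\cdot f(x)=f(g\cdot x)$ for all $g\in G_T$ and $x\in X$.
   Context: Fix countable groups $(\Delta_i)_{i\in\omega}$ and let $\Delta^n=\prod_{i<n}\Delta_i$ ($\Delta^0$ trivial). A group tree is a set $T\subseteq\bigcup_n\Delta^n$ closed under initial segments such that each $T^n:=T\cap\Delta^n$ is a subgroup of $\Delta^n$; it is pruned if every element of $T$ has a proper extension in $T$. $\ell(a)$ is the length of $a\in T$, and products/inverses of tuples of equal length $n$ are taken in $T^n$. $G_T$ is the closed subgroup of $\prod_i\Delta_i$ (product of discrete groups) consisting of those $g$ with $g\upharpoonright n\in T$ for all $n$. $\mathbb{R}^T$ carries the product topology ($T$ countable), and $G_T$ acts on it by $(g\cdot\mathbf{x})(b)=\mathbf{x}((g\upharpoonright\ell(b))^{-1}\cdot b)$. A Polish $G_T$-space is a Polish space with a continuous $G_T$-action. *)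

theory Defs
  imports "HOL-Analysis.Analysis" "HOL-Algebra.Group"
begin

text \<open>The groups Delta_i are given as a family Delta :: nat => 'a monoid of HOL-Algebra
  groups sharing one element type.  Tuples of length n are lists of length n.\<close>

definition Delta_pow :: "(nat \<Rightarrow> 'a monoid) \<Rightarrow> nat \<Rightarrow> 'a list monoid" where
  "Delta_pow Delta n =
     \<lparr> carrier = {xs. length xs = n \<and> (\<forall>i<n. xs ! i \<in> carrier (Delta i))},
       mult = (\<lambda>a b. map (\<lambda>i. a ! i \<otimes>\<^bsub>Delta i\<^esub> b ! i) [0..<n]),
       one = map (\<lambda>i. \<one>\<^bsub>Delta i\<^esub>) [0..<n] \<rparr>"

definition group_tree :: "(nat \<Rightarrow> 'a monoid) \<Rightarrow> 'a list set \<Rightarrow> bool" where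
  "group_tree Delta T \<longleftrightarrow>
     T \<subseteq> (\<Union>n. carrier (Delta_pow Delta n)) \<and>
     (\<forall>a\<in>T. \<forall>k. take k a \<in> T) \<and>
     (\<forall>n. subgroup {a \<in> T. length a = n} (Delta_pow Delta n))"

definition pruned :: "'a list set \<Rightarrow> bool" where
  "pruned T \<longleftrightarrow> (\<forall>a\<in>T. \<exists>b\<in>T. length a < length b \<and> take (length a) b = a)"

definition GT :: "(nat \<Rightarrow> 'a monoid) \<Rightarrow> 'a list set \<Rightarrow> (nat \<Rightarrow> 'a) set" where
  "GT Delta T = {g. (\<forall>i. g i \<in> carrier (Delta i)) \<and> (\<forall>n. map g [0..<n] \<in> T)}"

definition GT_group :: "(nat \<Rightarrow> 'a monoid) \<Rightarrow> 'a list set \<Rightarrow> (nat \<Rightarrow> 'a) monoid" where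
  "GT_group Delta T =
     \<lparr> carrier = GT Delta T,
       mult = (\<lambda>g h i. g i \<otimes>\<^bsub>Delta i\<^esub> h i),
       one = (\<lambda>i. \<one>\<^bsub>Delta i\<^esub>) \<rparr>"

definition GT_top :: "(nat \<Rightarrow> 'a monoid) \<Rightarrow> 'a list set \<Rightarrow> (nat \<Rightarrow> 'a) topology" where
  "GT_top Delta T = subtopology
     (product_topology (\<lambda>i. discrete_topology (carrier (Delta i))) UNIV) (GT Delta T)"

text \<open>R^T: real-valued functions on T (product topology); values outside T are
  the default value, as in the library's product topology.\<close>

definition RT_top :: "'a list set \<Rightarrow> ('a list \<Rightarrow> real) topology" where
  "RT_top T = product_topology (\<lambda>_. euclideanreal) T"

definition restr :: "(nat \<Rightarrow> 'a) \<Rightarrow> nat \<Rightarrow> 'a list" where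
  "restr g n = map g [0..<n]"

definition RT_action ::
  "(nat \<Rightarrow> 'a monoid) \<Rightarrow> 'a list set \<Rightarrow> (nat \<Rightarrow> 'a) \<Rightarrow> ('a list \<Rightarrow> real) \<Rightarrow> ('a list \<Rightarrow> real)" where
  "RT_action Delta T g x =
     (\<lambda>b. if b \<in> T then
             x (inv\<^bsub>Delta_pow Delta (length b)\<^esub> (restr g (length b)) \<otimes>\<^bsub>Delta_pow Delta (length b)\<^esub> b)
           else undefined)"

definition polish_space_top :: "'b topology \<Rightarrow> bool" where
  "polish_space_top X \<longleftrightarrow> completely_metrizable_space X \<and> separable_space X"

definition polish_G_space ::
  "'g monoid \<Rightarrow> 'g topology \<Rightarrow> 'b topology \<Rightarrow> ('g \<Rightarrow> 'b \<Rightarrow> 'b) \<Rightarrow> bool" where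
  "polish_G_space G GTop X act \<longleftrightarrow>
     polish_space_top X \<and>
     (\<forall>g\<in>carrier G. \<forall>x\<in>topspace X. act g x \<in> topspace X) \<and>
     (\<forall>x\<in>topspace X. act \<one>\<^bsub>G\<^esub> x = x) \<and>
     (\<forall>g\<in>carrier G. \<forall>h\<in>carrier G. \<forall>x\<in>topspace X. act (g \<otimes>\<^bsub>G\<^esub> h) x = act g (act h x)) \<and>
     continuous_map (prod_topology GTop X) X (\<lambda>(g, x). act g x)"

definition borel_map :: "'b topology \<Rightarrow> 'c topology \<Rightarrow> ('b \<Rightarrow> 'c) \<Rightarrow> bool" where
  "borel_map X Y f \<longleftrightarrow>
     f \<in> topspace X \<rightarrow> topspace Y \<and>
     (\<forall>U. openin Y U \<longrightarrow>
        {x \<in> topspace X. f x \<in> U} \<in> sigma_sets (topspace X) {V. openin X V})"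

end

theory Submission
  imports Defs "HOL-Algebra.Product_Groups"
begin

(* Fix a countable base (U k) of X and, for b in T of length n, the basic clopen coset
   N b = {g in G_T. g|n = b}. The code of x records, for every b in T, whether x lies in the open
   set (N b) U_k with k = fst (prod_decode n). Left translation by a^-1 maps N b onto
   N ((a|n)^-1 b), which is exactly the equivariance required by the action on R^T, and a countable
   index set with open coordinate sets makes the code Borel. For injectivity, separate x and y by
   a basic U_k containing x and a level m such that no g with g|m = 1 moves y into U_k (continuity
   of g |-> g y at 1); the coordinate b = 1 of length n = prod_encode (k, m) >= m then separates
   x from y. *)

lemma Delta_pow_simps:
  "carrier (Delta_pow Delta n) = {xs. length xs = n \<and> (\<forall>i<n. xs ! i \<in> carrier (Delta i))}"
  "a \<otimes>\<^bsub>Delta_pow Delta n\<^esub> b = map (\<lambda>i. a ! i \<otimes>\<^bsub>Delta i\<^esub> b ! i) [0..<n]"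
  "\<one>\<^bsub>Delta_pow Delta n\<^esub> = map (\<lambda>i. \<one>\<^bsub>Delta i\<^esub>) [0..<n]"
  by (simp_all add: Delta_pow_def)

lemma group_Delta_pow:
  assumes "\<And>i. group (Delta i)"
  shows "group (Delta_pow Delta n)"
proof (rule groupI)
  fix a assume a: "a \<in> carrier (Delta_pow Delta n)"
  show "\<exists>b\<in>carrier (Delta_pow Delta n). b \<otimes>\<^bsub>Delta_pow Delta n\<^esub> a = \<one>\<^bsub>Delta_pow Delta n\<^esub>"
    by (rule bexI[of _ "map (\<lambda>i. inv\<^bsub>Delta i\<^esub> (a ! i)) [0..<n]"])
      (use a assms in \<open>auto simp: Delta_pow_simps group.l_inv\<close>)
qed (use assms in \<open>auto simp: Delta_pow_simps group.is_monoid monoid.m_assoc monoid.m_closed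
      intro!: nth_equalityI\<close>)

lemma inv_Delta_pow:
  assumes "\<And>i. group (Delta i)" and "a \<in> carrier (Delta_pow Delta n)"
  shows "inv\<^bsub>Delta_pow Delta n\<^esub> a = map (\<lambda>i. inv\<^bsub>Delta i\<^esub> (a ! i)) [0..<n]"
  by (rule group.inv_equality) (use assms in \<open>auto simp: group_Delta_pow Delta_pow_simps group.l_inv\<close>)

lemma GT_group_eq: "GT_group Delta T = (product_group UNIV Delta)\<lparr>carrier := GT Delta T\<rparr>"
  by (simp add: GT_group_def product_group_def restrict_UNIV)

lemma openin_product_topology_finite_support:
  assumes "openin (product_topology Y I) W" and "h \<in> W"
  obtains F where "finite F" "F \<subseteq> I"
    "\<And>h'. h' \<in> topspace (product_topology Y I) \<Longrightarrow> (\<forall>i\<in>F. h' i = h i) \<Longrightarrow> h' \<in> W"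
proof -
  obtain V where V: "finite {i \<in> I. V i \<noteq> topspace (Y i)}" "h \<in> Pi\<^sub>E I V" "Pi\<^sub>E I V \<subseteq> W"
    using assms unfolding openin_product_topology_alt by blast
  show ?thesis
  proof
    fix h' assume h': "h' \<in> topspace (product_topology Y I)"
      and agree: "\<forall>i\<in>{i \<in> I. V i \<noteq> topspace (Y i)}. h' i = h i"
    have "h' \<in> Pi\<^sub>E I V"
    proof (rule PiE_I)
      show "h' i \<in> V i" if "i \<in> I" for i
        using that h' agree V(2) by (cases "V i = topspace (Y i)") (auto simp: PiE_iff)
    qed (use h' in \<open>auto simp: PiE_iff extensional_def\<close>)
    then show "h' \<in> W" using V(3) by blast
  qed (use V(1) in auto)
qed

lemma indicator_cylinder_in_sigma_sets:
  assumes "countable F" and A: "\<And>i. i \<in> F \<Longrightarrow> A i \<in> sigma_sets (topspace X) {V. openin X V}"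
  shows "{x \<in> topspace X. \<forall>i\<in>F. indicator (A i) x = (c i :: real)} \<in> sigma_sets (topspace X) {V. openin X V}"
proof -
  interpret sigma_algebra "topspace X" "sigma_sets (topspace X) {V. openin X V}"
    by (rule sigma_algebra_sigma_sets) (auto dest: openin_subset)
  have "{x \<in> topspace X. indicator (A i) x = (c i :: real)} =
      (if c i = 1 then A i else {}) \<union> (if c i = 0 then topspace X - A i else {})" if "i \<in> F" for i
    using sets_into_space[OF A[OF that]] by (auto simp: indicator_def)
  then show ?thesis
    using assms by (intro sets_Collect_countable_All') (auto simp: compl_sets)
qed

lemma borel_map_indicator_family:
  fixes A :: "'i \<Rightarrow> 'b set"
  assumes "countable I" and A: "\<And>i. i \<in> I \<Longrightarrow> A i \<in> sigma_sets (topspace X) {V. openin X V}"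
  shows "borel_map X (product_topology (\<lambda>_. euclideanreal) I)
           (\<lambda>x. restrict (\<lambda>i. indicator (A i) x :: real) I)"
proof -
  define f where "f x = restrict (\<lambda>i. indicator (A i) x :: real) I" for x
  define \<Sigma> where "\<Sigma> = sigma_sets (topspace X) {V. openin X V}"
  interpret sigma_algebra "topspace X" \<Sigma>
    unfolding \<Sigma>_def by (rule sigma_algebra_sigma_sets) (auto dest: openin_subset)
  define box where "box p = {x \<in> topspace X. \<forall>i\<in>fst p. indicator (A i) x = (snd p i :: real)}" for p
  define S where "S = (SIGMA F:{F. finite F \<and> F \<subseteq> I}. F \<rightarrow>\<^sub>E {0::real, 1})"
  have "countable S"
    unfolding S_def using assms(1)
    by (intro countable_SIGMA countable_Collect_finite_subset countable_PiE) auto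
  have box_in: "box p \<in> \<Sigma>" if "p \<in> S" for p
    using that A unfolding box_def \<Sigma>_def
    by (auto simp: S_def countable_finite intro!: indicator_cylinder_in_sigma_sets)
  have "{x \<in> topspace X. f x \<in> W} \<in> \<Sigma>" if W: "openin (product_topology (\<lambda>_. euclideanreal) I) W" for W
  proof -
    let ?P = "{x \<in> topspace X. f x \<in> W}"
    have "?P = {x \<in> topspace X. \<exists>p\<in>S. x \<in> box p \<and> box p \<subseteq> ?P}"
    proof (intro subset_antisym subsetI)
      fix x assume x: "x \<in> ?P"
      then obtain F where F: "finite F" "F \<subseteq> I"
        "\<And>h. h \<in> topspace (product_topology (\<lambda>_. euclideanreal) I) \<Longrightarrow> (\<forall>i\<in>F. h i = f x i) \<Longrightarrow> h \<in> W"
        using openin_product_topology_finite_support[OF W] by blast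
      define p where "p = (F, restrict (f x) F)"
      have "p \<in> S"
        using F unfolding p_def S_def by (force simp: f_def indicator_def)
      moreover have "box p \<subseteq> ?P"
        using F by (auto simp: box_def p_def f_def subset_iff)
      moreover have "x \<in> box p"
        using x F(2) by (auto simp: box_def p_def f_def)
      ultimately show "x \<in> {x \<in> topspace X. \<exists>p\<in>S. x \<in> box p \<and> box p \<subseteq> ?P}"
        using x by blast
    qed auto
    also have "\<dots> \<in> \<Sigma>"
      using \<open>countable S\<close> box_in
      by (intro sets_Collect_countable_Ex' sets_Collect_conj sets_Collect_const) (auto simp: box_def)
    finally show ?thesis .
  qed
  then show ?thesis
    unfolding borel_map_def f_def[symmetric] \<Sigma>_def[symmetric]
    by (auto simp: f_def)
qed

lemma (in Metric_space) separable_imp_second_countable: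
  assumes "separable_space mtopology"
  shows "second_countable mtopology"
proof -
  obtain C where C: "countable C" "C \<subseteq> M"
    and dense: "\<And>T. openin mtopology T \<Longrightarrow> T \<noteq> {} \<Longrightarrow> C \<inter> T \<noteq> {}"
    using assms unfolding separable_space_def dense_intersects_open by auto
  define B where "B = (\<lambda>(c, n). mball c (1 / Suc n)) ` (C \<times> UNIV)"
  have "\<exists>V\<in>B. x \<in> V \<and> V \<subseteq> U" if U: "openin mtopology U" "x \<in> U" for U x
  proof -
    obtain r where r: "r > 0" "mball x r \<subseteq> U" using U openin_mtopology by metis
    obtain n where n: "1 / Suc n < r / 2"
      by (metis \<open>r > 0\<close> half_gt_zero_iff nat_approx_posE)
    have x: "x \<in> M" using U openin_mtopology by blast
    then have "C \<inter> mball x (1 / Suc n) \<noteq> {}"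
      using dense[of "mball x (1 / Suc n)"] by (metis centre_in_mball_iff empty_iff
          of_nat_0_less_iff openin_mball zero_less_Suc zero_less_divide_1_iff)
    then obtain c where c: "c \<in> C" "d x c < 1 / Suc n" and cM: "c \<in> M" using C(2) by auto
    have "mball c (1 / Suc n) \<subseteq> mball x r"
    proof
      fix y assume "y \<in> mball c (1 / Suc n)"
      then have y: "y \<in> M" "d c y < 1 / Suc n" by auto
      have "d x y \<le> d x c + d c y" using triangle x cM y(1) .
      then show "y \<in> mball x r" using c(2) y n x by simp
    qed
    moreover have "x \<in> mball c (1 / Suc n)" using c cM x commute by auto
    ultimately show ?thesis using r c unfolding B_def by force
  qed
  moreover have "countable B" unfolding B_def using C(1) by auto
  ultimately show ?thesis unfolding second_countable_def B_def by auto
qed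

lemma polish_space_top_second_countable: "polish_space_top X \<Longrightarrow> second_countable X"
  unfolding polish_space_top_def
  by (metis Metric_space.separable_imp_second_countable completely_metrizable_imp_metrizable_space
      metrizable_space_def)

lemma second_countable_nat_base:
  assumes "second_countable X"
  obtains U :: "nat \<Rightarrow> 'b set" where "\<And>k. openin X (U k)"
    and "\<And>W x. openin X W \<Longrightarrow> x \<in> W \<Longrightarrow> \<exists>k. x \<in> U k \<and> U k \<subseteq> W"
proof -
  obtain B where B: "countable B" "\<forall>V\<in>B. openin X V"
    "\<forall>W x. openin X W \<and> x \<in> W \<longrightarrow> (\<exists>V\<in>B. x \<in> V \<and> V \<subseteq> W)"
    using assms unfolding second_countable_def by blast
  show ?thesis
  proof
    show "openin X (from_nat_into (insert {} B) k)" for k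
      using from_nat_into[of "insert {} B" k] B(2) by auto
    show "\<exists>k. x \<in> from_nat_into (insert {} B) k \<and> from_nat_into (insert {} B) k \<subseteq> W"
      if "openin X W" "x \<in> W" for W x
      using B(1,3) that by (metis countable_insert from_nat_into_surj insertCI)
  qed
qed

(* The set N U of all translates g U, g in N, written with preimages so that it is open
   whenever U is. *)
definition act_image :: "'g monoid \<Rightarrow> 'b topology \<Rightarrow> ('g \<Rightarrow> 'b \<Rightarrow> 'b) \<Rightarrow> 'g set \<Rightarrow> 'b set \<Rightarrow> 'b set"
  where "act_image G X act N U = {x \<in> topspace X. \<exists>g\<in>N. act (inv\<^bsub>G\<^esub> g) x \<in> U}"

locale polish_action =
  fixes G :: "'g monoid" and GTop :: "'g topology" and X :: "'b topology" and act :: "'g \<Rightarrow> 'b \<Rightarrow> 'b"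
  assumes group_G: "group G" and polish_G: "polish_G_space G GTop X act"
    and topspace_GTop: "topspace GTop = carrier G"
begin

lemma act_closed: "g \<in> carrier G \<Longrightarrow> x \<in> topspace X \<Longrightarrow> act g x \<in> topspace X"
  and act_one: "x \<in> topspace X \<Longrightarrow> act \<one>\<^bsub>G\<^esub> x = x"
  and act_mult: "g \<in> carrier G \<Longrightarrow> h \<in> carrier G \<Longrightarrow> x \<in> topspace X \<Longrightarrow>
    act (g \<otimes>\<^bsub>G\<^esub> h) x = act g (act h x)"
  and continuous_map_act: "continuous_map (prod_topology GTop X) X (\<lambda>(g, x). act g x)"
  using polish_G unfolding polish_G_space_def by blast+

lemma continuous_map_act_left:
  assumes "g \<in> carrier G"
  shows "continuous_map X X (act g)"
proof -
  have "continuous_map X (prod_topology GTop X) (\<lambda>x. (g, x))"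
    using assms by (intro continuous_map_pairedI) (auto simp: topspace_GTop)
  from continuous_map_compose[OF this continuous_map_act] show ?thesis
    by (simp add: o_def)
qed

lemma continuous_map_orbit:
  assumes "x \<in> topspace X"
  shows "continuous_map GTop X (\<lambda>g. act g x)"
proof -
  have "continuous_map GTop (prod_topology GTop X) (\<lambda>g. (g, x))"
    using assms by (intro continuous_map_pairedI) auto
  from continuous_map_compose[OF this continuous_map_act] show ?thesis
    by (simp add: o_def)
qed

lemma second_countable_X: "second_countable X"
  using polish_G polish_space_top_second_countable unfolding polish_G_space_def by blast

lemma Hausdorff_X: "Hausdorff_space X"
  using polish_G completely_metrizable_imp_metrizable_space metrizable_imp_Hausdorff_space
  unfolding polish_G_space_def polish_space_top_def by blast

lemma openin_act_image:
  assumes "N \<subseteq> carrier G" and "openin X U"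
  shows "openin X (act_image G X act N U)"
proof -
  have "act_image G X act N U = (\<Union>g\<in>N. {x \<in> topspace X. act (inv\<^bsub>G\<^esub> g) x \<in> U})"
    by (auto simp: act_image_def)
  moreover have "openin X {x \<in> topspace X. act (inv\<^bsub>G\<^esub> g) x \<in> U}" if "g \<in> N" for g
    using that assms group.inv_closed[OF group_G]
    by (intro openin_continuous_map_preimage[OF continuous_map_act_left]) auto
  ultimately show ?thesis by auto
qed

lemma act_mem_act_image_iff:
  assumes "a \<in> carrier G" and "x \<in> topspace X" and "N \<subseteq> carrier G"
  shows "act a x \<in> act_image G X act N U \<longleftrightarrow>
    x \<in> act_image G X act ((\<lambda>g. inv\<^bsub>G\<^esub> a \<otimes>\<^bsub>G\<^esub> g) ` N) U"
proof -
  have "act (inv\<^bsub>G\<^esub> (inv\<^bsub>G\<^esub> a \<otimes>\<^bsub>G\<^esub> g)) x = act (inv\<^bsub>G\<^esub> g) (act a x)" if "g \<in> N" for g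
    using that assms group_G by (simp add: group.inv_mult_group act_mult subsetD)
  then show ?thesis
    using assms act_closed unfolding act_image_def by auto
qed

lemma separate_by_orbit_nhds:
  assumes "x \<in> topspace X" and "y \<in> topspace X" and "x \<noteq> y"
  obtains U N where "openin X U" "x \<in> U" "openin GTop N" "\<one>\<^bsub>G\<^esub> \<in> N"
    "\<And>g. g \<in> N \<Longrightarrow> act g y \<notin> U"
proof -
  obtain U W where UW: "openin X U" "openin X W" "x \<in> U" "y \<in> W" "disjnt U W"
    using Hausdorff_X assms unfolding Hausdorff_space_def by blast
  show ?thesis
  proof
    show "openin GTop {g \<in> topspace GTop. act g y \<in> W}"
      using openin_continuous_map_preimage[OF continuous_map_orbit UW(2)] assms(2) .
    show "\<one>\<^bsub>G\<^esub> \<in> {g \<in> topspace GTop. act g y \<in> W}"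
      using UW(4) assms(2) monoid.one_closed[OF group.is_monoid[OF group_G]]
      by (simp add: topspace_GTop act_one)
    show "act g y \<notin> U" if "g \<in> {g \<in> topspace GTop. act g y \<in> W}" for g
      using that UW(5) by (auto simp: disjnt_def)
  qed (use UW in auto)
qed

end

definition cylinder :: "(nat \<Rightarrow> 'a monoid) \<Rightarrow> 'a list set \<Rightarrow> 'a list \<Rightarrow> (nat \<Rightarrow> 'a) set"
  where "cylinder Delta T c = {g \<in> GT Delta T. restr g (length c) = c}"

lemma cylinder_altdef:
  "cylinder Delta T c = {g \<in> carrier (GT_group Delta T). restr g (length c) = c}"
  by (simp add: cylinder_def GT_group_def)

lemma cylinder_subset_carrier: "cylinder Delta T c \<subseteq> carrier (GT_group Delta T)"
  by (auto simp: cylinder_altdef)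

locale tree_of_groups =
  fixes Delta :: "nat \<Rightarrow> 'a monoid" and T :: "'a list set"
  assumes groups: "\<And>i. group (Delta i)" and tree: "group_tree Delta T"
begin

lemma subgroup_tree_level: "subgroup {a \<in> T. length a = n} (Delta_pow Delta n)"
  using tree unfolding group_tree_def by blast

lemma tree_nth_carrier: "b \<in> T \<Longrightarrow> i < length b \<Longrightarrow> b ! i \<in> carrier (Delta i)"
  using tree unfolding group_tree_def Delta_pow_def by auto

lemma countable_group_tree:
  assumes "\<And>i. countable (carrier (Delta i))"
  shows "countable T"
proof (rule countable_subset)
  show "T \<subseteq> lists (\<Union>i. carrier (Delta i))"
    using tree_nth_carrier by (fastforce simp: in_set_conv_nth)
  show "countable (lists (\<Union>i. carrier (Delta i)))"
    using assms by (intro countable_lists countable_UN) auto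
qed

lemma restr_in_level: "g \<in> GT Delta T \<Longrightarrow> restr g n \<in> {a \<in> T. length a = n}"
  by (simp add: GT_def restr_def)

lemma restr_mult: "restr (g \<otimes>\<^bsub>GT_group Delta T\<^esub> h) n = restr g n \<otimes>\<^bsub>Delta_pow Delta n\<^esub> restr h n"
  by (simp add: GT_group_def Delta_pow_simps restr_def)

lemma inv_product_group_GT:
  "g \<in> GT Delta T \<Longrightarrow> inv\<^bsub>product_group UNIV Delta\<^esub> g = (\<lambda>i. inv\<^bsub>Delta i\<^esub> g i)"
  by (subst inv_product_group) (auto simp: GT_def restrict_UNIV groups)

lemma subgroup_GT: "subgroup (GT Delta T) (product_group UNIV Delta)"
proof (rule group.subgroupI)
  show "group (product_group UNIV Delta)"
    using groups by simp
  show "GT Delta T \<subseteq> carrier (product_group UNIV Delta)"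
    by (auto simp: GT_def)
  have "restr (\<lambda>i. \<one>\<^bsub>Delta i\<^esub>) n \<in> {a \<in> T. length a = n}" for n
    using subgroup.one_closed[OF subgroup_tree_level] by (simp add: Delta_pow_simps restr_def)
  then have "(\<lambda>i. \<one>\<^bsub>Delta i\<^esub>) \<in> GT Delta T"
    using groups by (simp add: GT_def restr_def group.is_monoid)
  then show "GT Delta T \<noteq> {}" by blast
next
  fix g assume g: "g \<in> GT Delta T"
  have "restr (\<lambda>i. inv\<^bsub>Delta i\<^esub> g i) n = inv\<^bsub>Delta_pow Delta n\<^esub> restr g n" for n
    using g by (simp add: inv_Delta_pow groups Delta_pow_simps restr_def GT_def)
  then show "inv\<^bsub>product_group UNIV Delta\<^esub> g \<in> GT Delta T"
    using g groups subgroup.m_inv_closed[OF subgroup_tree_level restr_in_level[OF g]]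
    by (auto simp: inv_product_group_GT GT_def restr_def)
next
  fix g h assume g: "g \<in> GT Delta T" and h: "h \<in> GT Delta T"
  show "g \<otimes>\<^bsub>product_group UNIV Delta\<^esub> h \<in> GT Delta T"
    using subgroup.m_closed[OF subgroup_tree_level restr_in_level[OF g] restr_in_level[OF h]]
      restr_mult[of g h] g h groups
    by (auto simp: GT_def GT_group_def restrict_UNIV restr_def group.is_monoid monoid.m_closed)
qed

lemma group_GT_group: "group (GT_group Delta T)"
  unfolding GT_group_eq using subgroup_GT groups
  by (simp add: group.subgroup_imp_group)

lemma group_hom_restr: "group_hom (GT_group Delta T) (Delta_pow Delta n) (\<lambda>g. restr g n)"
  by (intro group_hom.intro group_hom_axioms.intro group_GT_group group_Delta_pow groups homI
      restr_mult) (auto simp: GT_group_def Delta_pow_simps restr_def GT_def)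

lemma topspace_GT_top: "topspace (GT_top Delta T) = carrier (GT_group Delta T)"
  by (auto simp: GT_top_def GT_group_def topspace_product_topology GT_def)

lemma left_translate_cylinder:
  assumes a: "a \<in> GT Delta T" and c: "c \<in> carrier (Delta_pow Delta (length c))"
  shows "(\<lambda>g. inv\<^bsub>GT_group Delta T\<^esub> a \<otimes>\<^bsub>GT_group Delta T\<^esub> g) ` cylinder Delta T c =
    cylinder Delta T (inv\<^bsub>Delta_pow Delta (length c)\<^esub> restr a (length c) \<otimes>\<^bsub>Delta_pow Delta (length c)\<^esub> c)"
proof -
  define n where "n = length c"
  interpret G: group "GT_group Delta T" by (rule group_GT_group)
  interpret P: group "Delta_pow Delta n" by (rule group_Delta_pow[OF groups])
  interpret restr: group_hom "GT_group Delta T" "Delta_pow Delta n" "\<lambda>g. restr g n"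
    by (rule group_hom_restr)
  let ?c' = "inv\<^bsub>Delta_pow Delta n\<^esub> restr a n \<otimes>\<^bsub>Delta_pow Delta n\<^esub> c"
  have aG: "a \<in> carrier (GT_group Delta T)" using a by (simp add: GT_group_def)
  have cP: "c \<in> carrier (Delta_pow Delta n)" using c by (simp add: n_def)
  then have len: "length ?c' = n" using aG by (simp add: Delta_pow_simps)
  show ?thesis unfolding n_def[symmetric]
  proof (intro subset_antisym subsetI)
    fix h assume "h \<in> (\<lambda>g. inv\<^bsub>GT_group Delta T\<^esub> a \<otimes>\<^bsub>GT_group Delta T\<^esub> g) ` cylinder Delta T c"
    then obtain g where g: "g \<in> carrier (GT_group Delta T)" "restr g n = c"
      and h: "h = inv\<^bsub>GT_group Delta T\<^esub> a \<otimes>\<^bsub>GT_group Delta T\<^esub> g"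
      by (auto simp: cylinder_altdef n_def)
    then show "h \<in> cylinder Delta T ?c'"
      using aG len by (simp add: cylinder_altdef)
  next
    fix h assume "h \<in> cylinder Delta T ?c'"
    then have h: "h \<in> carrier (GT_group Delta T)" "restr h n = ?c'"
      using len by (auto simp: cylinder_altdef)
    then have "restr (a \<otimes>\<^bsub>GT_group Delta T\<^esub> h) n = c"
      using aG cP by (simp add: P.m_assoc[symmetric])
    then have "a \<otimes>\<^bsub>GT_group Delta T\<^esub> h \<in> cylinder Delta T c"
      using aG h by (auto simp: cylinder_altdef n_def)
    moreover have "h = inv\<^bsub>GT_group Delta T\<^esub> a \<otimes>\<^bsub>GT_group Delta T\<^esub> (a \<otimes>\<^bsub>GT_group Delta T\<^esub> h)"
      using aG h by (simp add: G.m_assoc[symmetric])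
    ultimately show "h \<in> (\<lambda>g. inv\<^bsub>GT_group Delta T\<^esub> a \<otimes>\<^bsub>GT_group Delta T\<^esub> g) ` cylinder Delta T c"
      by blast
  qed
qed

lemma subgroup_cylinder_one: "subgroup (cylinder Delta T \<one>\<^bsub>Delta_pow Delta n\<^esub>) (GT_group Delta T)"
proof -
  interpret restr: group_hom "GT_group Delta T" "Delta_pow Delta n" "\<lambda>g. restr g n"
    by (rule group_hom_restr)
  have "cylinder Delta T \<one>\<^bsub>Delta_pow Delta n\<^esub> = kernel (GT_group Delta T) (Delta_pow Delta n) (\<lambda>g. restr g n)"
    by (auto simp: cylinder_altdef kernel_def Delta_pow_simps)
  then show ?thesis using restr.subgroup_kernel by simp
qed

lemma cylinder_one_nhds:
  assumes "openin (GT_top Delta T) N" and "\<one>\<^bsub>GT_group Delta T\<^esub> \<in> N"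
  obtains m where "\<And>n. m \<le> n \<Longrightarrow> cylinder Delta T \<one>\<^bsub>Delta_pow Delta n\<^esub> \<subseteq> N"
proof -
  obtain P where P: "openin (product_topology (\<lambda>i. discrete_topology (carrier (Delta i))) UNIV) P"
    and N: "N = P \<inter> GT Delta T"
    using assms(1) unfolding GT_top_def openin_subtopology by blast
  obtain F where "finite F" and F: "\<And>h. h \<in> topspace (product_topology (\<lambda>i. discrete_topology (carrier (Delta i))) UNIV)
      \<Longrightarrow> (\<forall>i\<in>F. h i = \<one>\<^bsub>Delta i\<^esub>) \<Longrightarrow> h \<in> P"
    using openin_product_topology_finite_support[OF P, of "\<lambda>i. \<one>\<^bsub>Delta i\<^esub>"] assms(2) N
    by (auto simp: GT_group_def)
  obtain m where m: "F \<subseteq> {..<m}" using finite_nat_bounded[OF \<open>finite F\<close>] by blast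
  show ?thesis
  proof (intro that subsetI)
    fix n g assume "m \<le> n" and g: "g \<in> cylinder Delta T \<one>\<^bsub>Delta_pow Delta n\<^esub>"
    then have "g \<in> GT Delta T" "\<forall>i\<in>F. g i = \<one>\<^bsub>Delta i\<^esub>"
      using m by (auto simp: cylinder_def Delta_pow_simps restr_def map_eq_conv)
    then show "g \<in> N" using F N by (auto simp: GT_def topspace_product_topology)
  qed
qed

end

locale tree_action = tree_of_groups Delta T
  for Delta :: "nat \<Rightarrow> 'a monoid" and T :: "'a list set" +
  fixes X :: "'b topology" and act :: "(nat \<Rightarrow> 'a) \<Rightarrow> 'b \<Rightarrow> 'b"
  assumes polish_GT: "polish_G_space (GT_group Delta T) (GT_top Delta T) X act"

sublocale tree_action \<subseteq> polish_action "GT_group Delta T" "GT_top Delta T" X act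
  by (rule polish_action.intro) (simp_all add: group_GT_group polish_GT topspace_GT_top)

context tree_action
begin

(* Every basic set U k is paired with arbitrarily long nodes b, namely those of length
   prod_encode (k, m). *)
definition code_set :: "(nat \<Rightarrow> 'b set) \<Rightarrow> 'a list \<Rightarrow> 'b set" where
  "code_set U b = act_image (GT_group Delta T) X act (cylinder Delta T b) (U (fst (prod_decode (length b))))"

definition tree_code :: "(nat \<Rightarrow> 'b set) \<Rightarrow> 'b \<Rightarrow> 'a list \<Rightarrow> real" where
  "tree_code U x = restrict (\<lambda>b. indicator (code_set U b) x) T"

lemma borel_map_tree_code:
  assumes "countable T" and "\<And>k. openin X (U k)"
  shows "borel_map X (RT_top T) (tree_code U)"
  unfolding RT_top_def tree_code_def
  using assms openin_act_image[OF cylinder_subset_carrier]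
  by (intro borel_map_indicator_family sigma_sets.Basic) (auto simp: code_set_def)

lemma inj_on_tree_code:
  assumes base: "\<And>W x. openin X W \<Longrightarrow> x \<in> W \<Longrightarrow> \<exists>k. x \<in> U k \<and> U k \<subseteq> W"
  shows "inj_on (tree_code U) (topspace X)"
proof (rule inj_onI, rule ccontr)
  fix x y assume x: "x \<in> topspace X" and y: "y \<in> topspace X"
    and eq: "tree_code U x = tree_code U y" and "x \<noteq> y"
  obtain W N where W: "openin X W" "x \<in> W" and N: "openin (GT_top Delta T) N" "\<one>\<^bsub>GT_group Delta T\<^esub> \<in> N"
    and away: "\<And>g. g \<in> N \<Longrightarrow> act g y \<notin> W"
    using separate_by_orbit_nhds[OF x y \<open>x \<noteq> y\<close>] by blast
  obtain k where k: "x \<in> U k" "U k \<subseteq> W" using base[OF W] by blast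
  obtain m where m: "\<And>n. m \<le> n \<Longrightarrow> cylinder Delta T \<one>\<^bsub>Delta_pow Delta n\<^esub> \<subseteq> N"
    using cylinder_one_nhds[OF N] by blast
  define n where "n = prod_encode (k, m)"
  define b where "b = \<one>\<^bsub>Delta_pow Delta n\<^esub>"
  interpret Z: subgroup "cylinder Delta T b" "GT_group Delta T"
    unfolding b_def by (rule subgroup_cylinder_one)
  have "b \<in> T" unfolding b_def using subgroup.one_closed[OF subgroup_tree_level] by simp
  have k_b: "fst (prod_decode (length b)) = k" by (simp add: b_def n_def Delta_pow_simps)
  have "x \<in> code_set U b"
    using Z.one_closed x k unfolding code_set_def act_image_def k_b
    by (auto intro!: bexI[of _ "\<one>\<^bsub>GT_group Delta T\<^esub>"]
        simp: act_one monoid.inv_one[OF group.is_monoid[OF group_GT_group]])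
  moreover have "y \<notin> code_set U b"
  proof
    assume "y \<in> code_set U b"
    then obtain g where g: "g \<in> cylinder Delta T b" "act (inv\<^bsub>GT_group Delta T\<^esub> g) y \<in> U k"
      unfolding code_set_def act_image_def k_b by blast
    have "inv\<^bsub>GT_group Delta T\<^esub> g \<in> N"
      using Z.m_inv_closed[OF g(1)] m[of n] le_prod_encode_2 unfolding b_def n_def by blast
    then show False using away g(2) k(2) by blast
  qed
  ultimately have "tree_code U x b \<noteq> tree_code U y b"
    using \<open>b \<in> T\<close> by (simp add: tree_code_def)
  then show False using eq by simp
qed

lemma RT_action_tree_code:
  assumes a: "a \<in> GT Delta T" and x: "x \<in> topspace X"
  shows "RT_action Delta T a (tree_code U x) = tree_code U (act a x)"
proof
  fix b
  show "RT_action Delta T a (tree_code U x) b = tree_code U (act a x) b"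
  proof (cases "b \<in> T")
    case False
    then show ?thesis by (simp add: RT_action_def tree_code_def)
  next
    case True
    define n where "n = length b"
    define c where "c = inv\<^bsub>Delta_pow Delta n\<^esub> restr a n \<otimes>\<^bsub>Delta_pow Delta n\<^esub> b"
    have aG: "a \<in> carrier (GT_group Delta T)" using a by (simp add: GT_group_def)
    have "b \<in> carrier (Delta_pow Delta n)"
      using True tree_nth_carrier by (auto simp: n_def Delta_pow_simps)
    then have translate: "cylinder Delta T c =
        (\<lambda>g. inv\<^bsub>GT_group Delta T\<^esub> a \<otimes>\<^bsub>GT_group Delta T\<^esub> g) ` cylinder Delta T b"
      using left_translate_cylinder[OF a, of b] by (simp add: c_def n_def)
    have c: "c \<in> {a \<in> T. length a = n}"
      using True subgroup.m_closed[OF subgroup_tree_level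
          subgroup.m_inv_closed[OF subgroup_tree_level restr_in_level[OF a]]]
      by (simp add: c_def n_def)
    then have "x \<in> code_set U c \<longleftrightarrow> act a x \<in> code_set U b"
      using act_mem_act_image_iff[OF aG x cylinder_subset_carrier, of b] translate
      by (simp add: code_set_def n_def)
    then have "indicator (code_set U c) x = (indicator (code_set U b) (act a x) :: real)"
      by (simp add: indicator_def)
    then show ?thesis
      using True c by (simp add: RT_action_def tree_code_def c_def n_def)
  qed
qed

end

theorem mainTheorem12:
  fixes Delta :: "nat \<Rightarrow> 'a monoid" and T :: "'a list set"
    and X :: "'b topology" and act :: "(nat \<Rightarrow> 'a) \<Rightarrow> 'b \<Rightarrow> 'b"
  assumes "\<And>i. group (Delta i)"
    and "\<And>i. countable (carrier (Delta i))"
    and "group_tree Delta T"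
    and "pruned T"
    and "polish_G_space (GT_group Delta T) (GT_top Delta T) X act"
  shows "\<exists>f. borel_map X (RT_top T) f \<and> inj_on f (topspace X) \<and>
    (\<forall>g\<in>GT Delta T. \<forall>x\<in>topspace X. RT_action Delta T g (f x) = f (act g x))"
proof -
  interpret tree_action Delta T X act
    using assms(1,3,5) by (intro tree_action.intro tree_of_groups.intro tree_action_axioms.intro)
  obtain U :: "nat \<Rightarrow> 'b set" where U: "\<And>k. openin X (U k)"
    and base: "\<And>W x. openin X W \<Longrightarrow> x \<in> W \<Longrightarrow> \<exists>k. x \<in> U k \<and> U k \<subseteq> W"
    using second_countable_nat_base[OF second_countable_X] by blast
  have "countable T"
    using assms(2) by (rule countable_group_tree)
  then have "borel_map X (RT_top T) (tree_code U)"
    using U by (rule borel_map_tree_code)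
  moreover have "inj_on (tree_code U) (topspace X)"
    using base by (rule inj_on_tree_code)
  moreover have "\<forall>g\<in>GT Delta T. \<forall>x\<in>topspace X. RT_action Delta T g (tree_code U x) = tree_code U (act g x)"
    by (simp add: RT_action_tree_code)
  ultimately show ?thesis by blast
qed

end
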